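(* Let $\lambda$ be a nonzero real number and $n\ge2$ an integer. Then $$\sum_{k=2}^{n}(1)_{k-1,\frac{1}{\lambda}}\,\lambda^{k-2}\,S_{2,\lambda}(n,k)=(n-1)(1)_{n-1,\lambda}.$$
   Context: For real $y$, $\mu\neq 0$ and integer $k\ge0$: $(y)_{0,\mu}=1$, $(y)_{k,\mu}=y(y-\mu)\cdots(y-(k-1)\mu)$ (used with $\mu=\lambda$ and $\mu=1/\lambda$); $(y)_0=1$, $(y)_k=y(y-1)\cdots(y-k+1)$. The degenerate Stirling numbers of the second kind are defined by $(x)_{n,\lambda}=\sum_{k=0}^{n}S_{2,\lambda}(n,k)(x)_{k}$ ($n\ge0$); equivalently $\frac{1}{k!}(e_\lambda(t)-1)^k=\sum_{n\ge k}S_{2,\lambda}(n,k)\frac{t^n}{n!}$ with $e_\lambda(t)=(1+\lambda t)^{1/\lambda}$. *)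

theory Defs
  imports "HOL-Analysis.Analysis"
begin

definition gen_fall :: "real \<Rightarrow> nat \<Rightarrow> real \<Rightarrow> real" where
  "gen_fall y k \<mu> = (\<Prod>i<k. y - real i * \<mu>)"

definition fall :: "real \<Rightarrow> nat \<Rightarrow> real" where
  "fall y k = (\<Prod>i<k. y - real i)"

definition S2_deg :: "real \<Rightarrow> nat \<Rightarrow> nat \<Rightarrow> real" where
  "S2_deg l n = (THE s. (\<forall>k>n. s k = 0) \<and>
      (\<forall>x::real. gen_fall x n l = (\<Sum>k\<le>n. s k * fall x k)))"

end

theory Submission
  imports Defs
begin

text \<open>Since \<open>(x)_{n,\<lambda>} = x (x - \<lambda>)_{n-1,\<lambda>}\<close> and \<open>(x)_k = x (x - 1)_{k-1}\<close>, dividing the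
  defining expansion of \<open>(x)_{n,\<lambda>}\<close> by \<open>x\<close> (at \<open>x = 0\<close> by continuity) and putting
  \<open>x = y + 1\<close> gives \<open>(y + 1 - \<lambda>)_{n-1,\<lambda>} = \<Sum>_{k\<ge>1} S_{2,\<lambda>}(n,k) (y)_{k-1}\<close>.
  At \<open>y = 0\<close> this reads \<open>S_{2,\<lambda>}(n,1) = (1)_{n,\<lambda>} = (1 - (n-1)\<lambda>) (1)_{n-1,\<lambda>}\<close>.
  At \<open>y = \<lambda>\<close> the term \<open>k = 1\<close> is again \<open>S_{2,\<lambda>}(n,1)\<close>, while by
  \<open>\<lambda>^j (1)_{j,1/\<lambda>} = (\<lambda>)_j\<close> the terms with \<open>k \<ge> 2\<close> add up to \<open>\<lambda>\<close> times the left-hand side;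
  so \<open>\<lambda> \<cdot> LHS = (1)_{n-1,\<lambda>} - S_{2,\<lambda>}(n,1) = (n-1)\<lambda> (1)_{n-1,\<lambda>}\<close>.\<close>

lemma fall_Suc: "fall x (Suc k) = fall x k * (x - real k)"
  by (simp add: fall_def)

lemma fall_Suc_shift: "fall x (Suc k) = x * fall (x - 1) k"
  unfolding fall_def by (subst prod.lessThan_Suc_shift) (simp add: algebra_simps)

lemma fall_of_nat_eq_0: "j < k \<Longrightarrow> fall (real j) k = 0"
  unfolding fall_def by (rule prod_zero) auto

lemma fall_of_nat_self: "fall (real j) j = fact j"
proof (induction j)
  case 0
  then show ?case by (simp add: fall_def)
next
  case (Suc j)
  have "fall (real (Suc j)) (Suc j) = real (Suc j) * fall (real j) j"
    by (simp add: fall_Suc_shift)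
  then show ?case
    using Suc by simp
qed

lemma gen_fall_Suc: "gen_fall x (Suc k) \<mu> = gen_fall x k \<mu> * (x - real k * \<mu>)"
  by (simp add: gen_fall_def)

lemma gen_fall_Suc_shift: "gen_fall x (Suc k) \<mu> = x * gen_fall (x - \<mu>) k \<mu>"
  unfolding gen_fall_def by (subst prod.lessThan_Suc_shift) (simp add: algebra_simps)

lemma gen_fall_reciprocal:
  assumes "l \<noteq> 0"
  shows "l ^ k * gen_fall x k (1 / l) = fall (l * x) k"
proof -
  have "l ^ k * gen_fall x k (1 / l) = (\<Prod>i<k. l * (x - real i * (1 / l)))"
    by (simp add: gen_fall_def prod.distrib)
  also have "\<dots> = fall (l * x) k"
    unfolding fall_def using assms by (intro prod.cong) (simp_all add: field_simps)
  finally show ?thesis .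
qed

lemma fall_expansion_coeff_eq_0:
  assumes "\<And>x. (\<Sum>i\<le>n. c i * fall x i) = 0" and "k \<le> n"
  shows "c k = 0"
  using \<open>k \<le> n\<close>
proof (induction k rule: less_induct)
  case (less k)
  \<comment> \<open>at \<open>x = k\<close> the terms \<open>i > k\<close> vanish, and so do the terms \<open>i < k\<close> by induction\<close>
  have "0 = (\<Sum>i\<le>n. c i * fall (real k) i)"
    using assms(1) by simp
  also have "\<dots> = c k * fall (real k) k + (\<Sum>i\<in>{..n} - {k}. c i * fall (real k) i)"
    using less.prems by (intro sum.remove) auto
  also have "(\<Sum>i\<in>{..n} - {k}. c i * fall (real k) i) = 0"
    using less fall_of_nat_eq_0[of k] by (intro sum.neutral) (auto simp: nat_neq_iff)
  finally show ?case
    by (simp add: fall_of_nat_self)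
qed

text \<open>The triangular recurrence of the degenerate Stirling numbers supplies the coefficients
  whose existence the definite description in \<^const>\<open>S2_deg\<close> presupposes.\<close>

fun S2_deg_rec :: "real \<Rightarrow> nat \<Rightarrow> nat \<Rightarrow> real" where
  "S2_deg_rec l 0 k = (if k = 0 then 1 else 0)"
| "S2_deg_rec l (Suc n) k =
     (case k of 0 \<Rightarrow> 0 | Suc j \<Rightarrow> S2_deg_rec l n j) + (real k - real n * l) * S2_deg_rec l n k"

lemma S2_deg_rec_eq_0: "n < k \<Longrightarrow> S2_deg_rec l n k = 0"
  by (induction n arbitrary: k) (auto split: nat.split)

lemma gen_fall_S2_deg_rec_expansion: "gen_fall x n l = (\<Sum>k\<le>n. S2_deg_rec l n k * fall x k)"
proof (induction n)
  case 0
  then show ?case by (simp add: gen_fall_def fall_def)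
next
  case (Suc n)
  have "gen_fall x (Suc n) l
      = (\<Sum>k\<le>n. S2_deg_rec l n k * fall x (Suc k))
        + (\<Sum>k\<le>n. (real k - real n * l) * S2_deg_rec l n k * fall x k)"
    unfolding gen_fall_Suc Suc sum_distrib_right sum.distrib[symmetric]
    by (rule sum.cong) (auto simp: fall_Suc algebra_simps)
  also have "(\<Sum>k\<le>n. S2_deg_rec l n k * fall x (Suc k))
      = (\<Sum>k\<le>Suc n. (case k of 0 \<Rightarrow> 0 | Suc j \<Rightarrow> S2_deg_rec l n j) * fall x k)"
    by (subst sum.atMost_Suc_shift) simp
  also have "(\<Sum>k\<le>n. (real k - real n * l) * S2_deg_rec l n k * fall x k)
      = (\<Sum>k\<le>Suc n. (real k - real n * l) * S2_deg_rec l n k * fall x k)"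
    by (simp add: S2_deg_rec_eq_0)
  finally show ?case
    by (simp add: sum.distrib[symmetric] algebra_simps)
qed

lemma S2_deg_eq_rec: "S2_deg l n = S2_deg_rec l n"
  unfolding S2_deg_def
proof (rule the_equality)
  show "(\<forall>k>n. S2_deg_rec l n k = 0) \<and>
      (\<forall>x. gen_fall x n l = (\<Sum>k\<le>n. S2_deg_rec l n k * fall x k))"
    using S2_deg_rec_eq_0 gen_fall_S2_deg_rec_expansion by blast
next
  fix s
  assume s: "(\<forall>k>n. s k = 0) \<and> (\<forall>x. gen_fall x n l = (\<Sum>k\<le>n. s k * fall x k))"
  show "s = S2_deg_rec l n"
  proof
    fix k
    show "s k = S2_deg_rec l n k"
    proof (cases "k \<le> n")
      case True
      have "\<And>x. (\<Sum>i\<le>n. (s i - S2_deg_rec l n i) * fall x i) = 0"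
        using s gen_fall_S2_deg_rec_expansion
        by (simp add: left_diff_distrib sum_subtractf)
      then show ?thesis
        using fall_expansion_coeff_eq_0[OF _ True] by fastforce
    qed (use s S2_deg_rec_eq_0 in auto)
  qed
qed

lemma gen_fall_S2_deg_expansion: "gen_fall x n l = (\<Sum>k\<le>n. S2_deg l n k * fall x k)"
  by (simp add: S2_deg_eq_rec gen_fall_S2_deg_rec_expansion)

lemma S2_deg_Suc_0: "S2_deg l (Suc n) 0 = 0"
  unfolding S2_deg_eq_rec by (induction n) simp_all

lemma isCont_eq_if_eq_off_point:
  fixes f :: "'a::{perfect_space, t2_space} \<Rightarrow> 'b::t2_space"
  assumes "isCont f a" and "\<And>x. x \<noteq> a \<Longrightarrow> f x = c"
  shows "f a = c"
proof -
  have "f \<midarrow>a\<rightarrow> c"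
    using assms(2) by (subst LIM_equal[where g = "\<lambda>_. c"]) auto
  with isContD[OF assms(1)] show ?thesis
    by (rule LIM_unique)
qed

lemma gen_fall_S2_deg_shifted_expansion:
  "gen_fall (y + 1 - l) n l = (\<Sum>k=1..Suc n. S2_deg l (Suc n) k * fall y (k - 1))"
  (is "?lhs y = ?rhs y")
proof -
  have times_y_plus_1: "(y + 1) * ?lhs y = (y + 1) * ?rhs y" for y
  proof -
    have "(y + 1) * ?lhs y = gen_fall (y + 1) (Suc n) l"
      by (simp add: gen_fall_Suc_shift)
    also have "\<dots> = (\<Sum>k=1..Suc n. S2_deg l (Suc n) k * fall (y + 1) k)"
      by (simp only: gen_fall_S2_deg_expansion sum.atMost_shift sum.atLeast1_atMost_eq)
        (simp add: S2_deg_Suc_0 sum.atLeast1_atMost_eq)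
    also have "\<dots> = (y + 1) * ?rhs y"
      unfolding sum_distrib_left
    proof (intro sum.cong)
      fix k assume "k \<in> {1..Suc n}"
      then have "fall (y + 1) k = (y + 1) * fall y (k - 1)"
        using fall_Suc_shift[of "y + 1" "k - 1"] by simp
      then show "S2_deg l (Suc n) k * fall (y + 1) k
          = (y + 1) * (S2_deg l (Suc n) k * fall y (k - 1))"
        by simp
    qed simp
    finally show ?thesis .
  qed
  \<comment> \<open>both sides are polynomials in \<open>y\<close>, so the identity survives at \<open>y = -1\<close>\<close>
  have "?lhs y - ?rhs y = 0" if "y \<noteq> -1" for y
  proof -
    from that have "y + 1 \<noteq> 0"
      by linarith
    with times_y_plus_1[of y] show ?thesis
      by simp
  qed
  moreover have "isCont (\<lambda>y. ?lhs y - ?rhs y) (-1)"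
    unfolding gen_fall_def fall_def by (intro continuous_intros)
  ultimately have "?lhs y - ?rhs y = 0" for y
    using isCont_eq_if_eq_off_point by (cases "y = -1") blast+
  then show "?lhs y = ?rhs y" by simp
qed

lemma S2_deg_Suc_1: "S2_deg l (Suc n) 1 = gen_fall 1 (Suc n) l"
proof -
  have "gen_fall 1 (Suc n) l = (\<Sum>k=1..Suc n. S2_deg l (Suc n) k * fall 0 (k - 1))"
    using gen_fall_S2_deg_shifted_expansion[where y = 0] by (simp add: gen_fall_Suc_shift)
  also have "\<dots> = S2_deg l (Suc n) 1 + (\<Sum>k=2..Suc n. S2_deg l (Suc n) k * fall 0 (k - 1))"
    by (subst sum.atLeast_Suc_atMost) (simp_all add: fall_def numeral_2_eq_2)
  also have "(\<Sum>k=2..Suc n. S2_deg l (Suc n) k * fall 0 (k - 1)) = 0"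
    using fall_of_nat_eq_0[of 0] by (intro sum.neutral) simp
  finally show ?thesis
    by simp
qed

lemma gen_fall_1_eq_S2_deg_sum:
  "gen_fall 1 n l = S2_deg l (Suc n) 1 + (\<Sum>k=2..Suc n. S2_deg l (Suc n) k * fall l (k - 1))"
proof -
  have "gen_fall 1 n l = (\<Sum>k=1..Suc n. S2_deg l (Suc n) k * fall l (k - 1))"
    using gen_fall_S2_deg_shifted_expansion[where y = l and n = n and l = l] by simp
  also have "\<dots> = S2_deg l (Suc n) 1 + (\<Sum>k=2..Suc n. S2_deg l (Suc n) k * fall l (k - 1))"
    by (subst sum.atLeast_Suc_atMost) (simp_all add: fall_def numeral_2_eq_2)
  finally show ?thesis .
qed

theorem theorem15:
  fixes l :: real and n :: nat
  assumes "l \<noteq> 0" and "n \<ge> 2"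
  shows "(\<Sum>k=2..n. gen_fall 1 (k - 1) (1 / l) * l ^ (k - 2) * S2_deg l n k)
         = real (n - 1) * gen_fall 1 (n - 1) l"
proof -
  obtain m where n: "n = Suc m"
    using assms(2) by (intro that[of "n - 1"]) auto
  have "l * (gen_fall 1 (k - 1) (1 / l) * l ^ (k - 2)) = fall l (k - 1)" if "k \<ge> 2" for k
  proof -
    obtain j where "k = Suc (Suc j)"
      using \<open>k \<ge> 2\<close> by (metis add_2_eq_Suc le_add_diff_inverse)
    then show ?thesis
      using gen_fall_reciprocal[OF assms(1), of "Suc j" 1] by (simp add: ac_simps)
  qed
  then have "l * (\<Sum>k=2..n. gen_fall 1 (k - 1) (1 / l) * l ^ (k - 2) * S2_deg l n k)
      = (\<Sum>k=2..n. S2_deg l n k * fall l (k - 1))"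
    unfolding sum_distrib_left by (intro sum.cong) (auto simp: algebra_simps)
  also have "\<dots> = gen_fall 1 m l - S2_deg l n 1"
    using gen_fall_1_eq_S2_deg_sum[of m l] by (simp add: n)
  also have "\<dots> = l * (real m * gen_fall 1 m l)"
    using S2_deg_Suc_1[of l m] by (simp add: n gen_fall_Suc algebra_simps)
  finally show ?thesis
    using assms(1) by (simp add: n)
qed

end
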